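(* Let $\ell\ge1$ and $\kappa\ge1$ be integers. For each integer $1\le \nu\le \kappa$ and $u>1$, \[ \widetilde{K}_{\ell}^{(\nu)}(u,\kappa)=(\kappa)_{\nu}\,\widetilde{K}_{\ell}(u,\kappa-\nu)+\sum_{j=0}^{\nu-1}\sum_{m=0}^{\ell}\sum_{r=0}^{\ell-m}\frac{(-1)^{r}\Gamma(\kappa+1)}{m!\,(\ell-m-r)!}E_{\kappa-j,m}C_{r,0}\left(\log^{\ell-m-r}u\right)^{(\nu-j)}, \] where all derivatives are with respect to $u$.
   Context: For integers $\ell\ge1$, $\kappa\ge0$ and $u>1$, define \[ \widetilde{K}_{\ell}(u,\kappa):=\sum_{m=0}^{\ell}\sum_{n=m}^{\kappa}\sum_{r=0}^{\ell-m}\frac{(-1)^{r}\Gamma(\kappa+1)}{m!\,(\ell-m-r)!}E_{n,m}C_{r,\kappa-n}u^{\kappa-n}\log^{\ell-m-r}u, \] where the sum over $n$ is empty if $m>\kappa$; the constants $C_{r,\kappa}$ ($r,\kappa\ge0$) are defined by $\sum_{r\ge0}C_{r,\kappa}z^r=e^{\gamma z}/\Gamma(\kappa+1-z)$ with $\gamma$ Euler's constant; the constants $E_{n,m}$ ($n,m\ge0$) are defined by $\sum_{n\ge0}E_{n,m}z^n=\left(\int_0^z\frac{1-e^{-t}}{t}\,dt\right)^m$. $\widetilde{K}_{\ell}^{(\nu)}$ denotes the $\nu$-th derivative in $u$, $\left(\log^{k}u\right)^{(i)}$ denotes the $i$-th derivative in $u$ of $(\log u)^k$, and $(x)_{n}:=x(x-1)\cdots(x-n+1)$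 is the falling factorial. *)

theory Defs
  imports "HOL-Analysis.Analysis"
begin

definition taylor_coeff :: "nat \<Rightarrow> (real \<Rightarrow> real) \<Rightarrow> real" where
  "taylor_coeff n f = (deriv ^^ n) f 0 / fact n"

definition Ccoef :: "nat \<Rightarrow> nat \<Rightarrow> real" where
  "Ccoef r \<kappa> = taylor_coeff r (\<lambda>z. exp (euler_mascheroni * z) * rGamma (real \<kappa> + 1 - z))"

definition Ein :: "real \<Rightarrow> real" where
  "Ein z = (if 0 \<le> z then integral {0..z} (\<lambda>t. (1 - exp (- t)) / t)
            else - integral {z..0} (\<lambda>t. (1 - exp (- t)) / t))"

definition Ecoef :: "nat \<Rightarrow> nat \<Rightarrow> real" where
  "Ecoef n m = taylor_coeff n (\<lambda>z. Ein z ^ m)"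

definition Ktilde :: "nat \<Rightarrow> real \<Rightarrow> nat \<Rightarrow> real" where
  "Ktilde l u \<kappa> =
     (\<Sum>m=0..l. \<Sum>n=m..\<kappa>. \<Sum>r=0..l-m.
        (-1)^r * Gamma (real \<kappa> + 1) / (fact m * fact (l - m - r))
        * Ecoef n m * Ccoef r (\<kappa> - n) * u ^ (\<kappa> - n) * ln u ^ (l - m - r))"

definition falling :: "real \<Rightarrow> nat \<Rightarrow> real" where
  "falling x n = (\<Prod>i<n. (x - real i))"

end

theory Submission
  imports Defs "HOL-Complex_Analysis.Complex_Analysis"
begin

text \<open>
  Grouping the terms of \<open>Ktilde\<close> by the power of \<open>u\<close> writes
  \<open>Ktilde l u \<kappa> = \<kappa>! \<Sum>\<^sub>m \<Sum>\<^sub>n\<^sub>=\<^sub>m\<^sub>.\<^sub>.\<^sub>\<kappa> E(n,m) Q(m,\<kappa>-n,u)\<close>, where the block \<open>Q(m,k,u)\<close>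
  (\<open>Kblock\<close>) collects the terms containing \<open>u\<^sup>k\<close>. The functional equation of \<open>1/\<Gamma>\<close>
  gives \<open>C(r,k-1) = k C(r,k) - C(r-1,k)\<close>, which is exactly what makes
  \<open>\<partial>\<^sub>u Q(m,k,u) = Q(m,k-1,u)\<close> for \<open>k \<ge> 1\<close>. Since \<open>Ein 0 = 0\<close>, \<open>E(n,m) = 0\<close> for \<open>n < m\<close>,
  so one differentiation gives \<open>\<kappa> Ktilde l u (\<kappa>-1)\<close> plus the derivatives of the purely
  logarithmic blocks \<open>Q(m,0,u)\<close> (\<open>Klog\<close>), and the formula follows by induction on \<open>\<nu>\<close>.
  Smoothness, the recursion for \<open>C\<close> and the vanishing of \<open>E\<close> are read off from
  holomorphic extensions to the complex plane.
\<close>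

section \<open>Smooth real functions\<close>

definition smooth_on :: "real set \<Rightarrow> (real \<Rightarrow> real) \<Rightarrow> bool" where
  "smooth_on S f \<longleftrightarrow>
     (\<forall>n. \<forall>x\<in>S. ((deriv ^^ n) f has_real_derivative deriv ((deriv ^^ n) f) x) (at x))"

lemma smooth_on_deriv: "smooth_on S f \<Longrightarrow> smooth_on S (deriv f)"
  unfolding smooth_on_def by (metis funpow_Suc_right o_apply)

lemma smooth_on_higher_deriv: "smooth_on S f \<Longrightarrow> smooth_on S ((deriv ^^ i) f)"
  by (induction i) (auto simp: smooth_on_deriv)

lemma smooth_on_imp_has_real_derivative:
  "smooth_on S f \<Longrightarrow> x \<in> S \<Longrightarrow> (f has_real_derivative deriv f x) (at x)"
  unfolding smooth_on_def by (metis funpow_0)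

lemma higher_deriv_lincomb:
  fixes f :: "'i \<Rightarrow> real \<Rightarrow> real"
  assumes S: "open S" and f: "\<And>i. i \<in> I \<Longrightarrow> smooth_on S (f i)"
    and x: "x \<in> S"
  shows "(deriv ^^ n) (\<lambda>v. \<Sum>i\<in>I. c i * f i v) x = (\<Sum>i\<in>I. c i * (deriv ^^ n) (f i) x)"
  using x
proof (induction n arbitrary: x)
  case 0
  then show ?case by simp
next
  case (Suc n)
  have "eventually (\<lambda>y. y \<in> S) (nhds x)"
    using S Suc.prems by (rule eventually_nhds_in_open)
  then have "eventually (\<lambda>y. (deriv ^^ n) (\<lambda>v. \<Sum>i\<in>I. c i * f i v) y
                            = (\<Sum>i\<in>I. c i * (deriv ^^ n) (f i) y)) (nhds x)"
    by (rule eventually_mono) (use Suc.IH in auto)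
  then have "(deriv ^^ Suc n) (\<lambda>v. \<Sum>i\<in>I. c i * f i v) x
               = deriv (\<lambda>y. \<Sum>i\<in>I. c i * (deriv ^^ n) (f i) y) x"
    by (simp add: deriv_cong_ev)
  also have "\<dots> = (\<Sum>i\<in>I. c i * deriv ((deriv ^^ n) (f i)) x)"
    using f Suc.prems unfolding smooth_on_def
    by (intro DERIV_imp_deriv DERIV_sum DERIV_cmult) auto
  finally show ?case by simp
qed

lemma smooth_on_lincomb:
  fixes f :: "'i \<Rightarrow> real \<Rightarrow> real"
  assumes S: "open S" and f: "\<And>i. i \<in> I \<Longrightarrow> smooth_on S (f i)"
  shows "smooth_on S (\<lambda>v. \<Sum>i\<in>I. c i * f i v)"
  unfolding smooth_on_def
proof (intro allI ballI)
  fix n x assume x: "x \<in> S"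
  have "((\<lambda>y. \<Sum>i\<in>I. c i * (deriv ^^ n) (f i) y) has_real_derivative
          (\<Sum>i\<in>I. c i * deriv ((deriv ^^ n) (f i)) x)) (at x)"
    using f x unfolding smooth_on_def by (intro DERIV_sum DERIV_cmult) auto
  then have "((deriv ^^ n) (\<lambda>v. \<Sum>i\<in>I. c i * f i v) has_real_derivative
          (\<Sum>i\<in>I. c i * deriv ((deriv ^^ n) (f i)) x)) (at x)"
    by (rule has_field_derivative_transform_within_open[OF _ S x])
       (simp add: higher_deriv_lincomb[OF S f, where c = c])
  then show "((deriv ^^ n) (\<lambda>v. \<Sum>i\<in>I. c i * f i v) has_real_derivative
               deriv ((deriv ^^ n) (\<lambda>v. \<Sum>i\<in>I. c i * f i v)) x) (at x)"
    by (rule DERIV_deriv_iff_has_field_derivative[THEN iffD2, OF exI])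
qed

lemma smooth_on_sum:
  "open S \<Longrightarrow> (\<And>i. i \<in> I \<Longrightarrow> smooth_on S (f i)) \<Longrightarrow>
     smooth_on S (\<lambda>v. \<Sum>i\<in>I. f i v)"
  using smooth_on_lincomb[of S I f "\<lambda>_. 1"] by simp

lemma higher_deriv_sum:
  "open S \<Longrightarrow> (\<And>i. i \<in> I \<Longrightarrow> smooth_on S (f i)) \<Longrightarrow> x \<in> S \<Longrightarrow>
     (deriv ^^ n) (\<lambda>v. \<Sum>i\<in>I. f i v) x = (\<Sum>i\<in>I. (deriv ^^ n) (f i) x)"
  using higher_deriv_lincomb[of S I f x n "\<lambda>_. 1"] by simp

lemma higher_deriv_add_cmult:
  assumes "open S" "smooth_on S f" "smooth_on S g" "x \<in> S"
  shows "(deriv ^^ n) (\<lambda>v. a * f v + g v) x = a * (deriv ^^ n) f x + (deriv ^^ n) g x"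
proof -
  have "smooth_on S (if b then f else g)" for b
    using assms by simp
  then have "(deriv ^^ n) (\<lambda>v. \<Sum>b\<in>UNIV. (if b then a else 1) * (if b then f else g) v) x
               = (\<Sum>b\<in>UNIV. (if b then a else 1) * (deriv ^^ n) (if b then f else g) x)"
    using assms(1,4) by (intro higher_deriv_lincomb) auto
  then show ?thesis
    by (simp add: UNIV_bool add.commute)
qed

section \<open>Real restrictions of holomorphic functions\<close>

lemma has_real_derivative_Re_holomorphic:
  fixes F :: "complex \<Rightarrow> complex"
  assumes "F holomorphic_on T" "open T" "complex_of_real x \<in> T"
  shows "((\<lambda>y. Re (F (of_real y))) has_real_derivative Re (deriv F (of_real x))) (at x)"
proof -
  have "(F has_field_derivative deriv F (of_real x)) (at (of_real x))"
    using assms by (intro holomorphic_derivI)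
  from has_vector_derivative_real_field[OF this]
  have "((\<lambda>y. F (of_real y)) has_vector_derivative deriv F (of_real x)) (at x)" .
  from bounded_linear.has_vector_derivative[OF bounded_linear_Re this]
  show ?thesis by (simp add: has_real_derivative_iff_has_vector_derivative)
qed

lemma higher_deriv_Re_holomorphic:
  fixes f :: "real \<Rightarrow> real" and F :: "complex \<Rightarrow> complex"
  assumes F: "F holomorphic_on T" and T: "open T" and S: "open S"
    and ST: "\<And>x. x \<in> S \<Longrightarrow> complex_of_real x \<in> T"
    and fF: "\<And>x. x \<in> S \<Longrightarrow> f x = Re (F (of_real x))"
    and x: "x \<in> S"
  shows "(deriv ^^ n) f x = Re ((deriv ^^ n) F (of_real x))"
  using x
proof (induction n arbitrary: x)
  case 0
  then show ?case by (simp add: fF)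
next
  case (Suc n)
  have "eventually (\<lambda>y. y \<in> S) (nhds x)"
    using S Suc.prems by (rule eventually_nhds_in_open)
  then have "eventually (\<lambda>y. (deriv ^^ n) f y = Re ((deriv ^^ n) F (of_real y))) (nhds x)"
    by (rule eventually_mono) (use Suc.IH in auto)
  then have "(deriv ^^ Suc n) f x = deriv (\<lambda>y. Re ((deriv ^^ n) F (of_real y))) x"
    by (simp add: deriv_cong_ev)
  also have "\<dots> = Re (deriv ((deriv ^^ n) F) (of_real x))"
    using holomorphic_higher_deriv[OF F T] T ST[OF Suc.prems]
    by (intro DERIV_imp_deriv has_real_derivative_Re_holomorphic)
  finally show ?case by simp
qed

lemma smooth_on_Re_holomorphic:
  fixes f :: "real \<Rightarrow> real" and F :: "complex \<Rightarrow> complex"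
  assumes F: "F holomorphic_on T" and T: "open T" and S: "open S"
    and ST: "\<And>x. x \<in> S \<Longrightarrow> complex_of_real x \<in> T"
    and fF: "\<And>x. x \<in> S \<Longrightarrow> f x = Re (F (of_real x))"
  shows "smooth_on S f"
  unfolding smooth_on_def
proof (intro allI ballI)
  fix n x assume x: "x \<in> S"
  have "((\<lambda>y. Re ((deriv ^^ n) F (of_real y))) has_real_derivative
          Re (deriv ((deriv ^^ n) F) (of_real x))) (at x)"
    using holomorphic_higher_deriv[OF F T] T ST[OF x]
    by (rule has_real_derivative_Re_holomorphic)
  then have "((deriv ^^ n) f has_real_derivative Re (deriv ((deriv ^^ n) F) (of_real x))) (at x)"
    by (rule has_field_derivative_transform_within_open[OF _ S x])
       (use higher_deriv_Re_holomorphic[OF assms] in auto)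
  then show "((deriv ^^ n) f has_real_derivative deriv ((deriv ^^ n) f) x) (at x)"
    by (rule DERIV_deriv_iff_has_field_derivative[THEN iffD2, OF exI])
qed

lemma smooth_on_power_mult_ln_power: "smooth_on {0<..} (\<lambda>v. v ^ k * ln v ^ p)"
proof (rule smooth_on_Re_holomorphic[where F = "\<lambda>z. z ^ k * Ln z ^ p" and T = "{z. 0 < Re z}"])
  show "(\<lambda>z. z ^ k * Ln z ^ p) holomorphic_on {z. 0 < Re z}"
    by (intro holomorphic_intros) (auto simp: nonpos_Reals_def)
  show "open {z. 0 < Re z}"
    by (simp add: open_halfspace_Re_gt)
  fix x :: real assume x: "x \<in> {0<..}"
  then show "complex_of_real x \<in> {z. 0 < Re z}" by simp
  have "Ln (complex_of_real x) = of_real (ln x)"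
    using x by (simp add: Ln_of_real)
  then have "complex_of_real x ^ k * Ln (of_real x) ^ p = of_real (x ^ k * ln x ^ p)"
    by simp
  then show "x ^ k * ln x ^ p = Re (complex_of_real x ^ k * Ln (complex_of_real x) ^ p)"
    by (simp only: Re_complex_of_real)
qed simp

lemma smooth_on_ln_power: "smooth_on {0<..} (\<lambda>v. ln v ^ p)"
  using smooth_on_power_mult_ln_power[of 0 p] by simp

section \<open>The coefficients \<open>C\<^sub>r\<^sub>,\<^sub>k\<close>\<close>

definition C_gen :: "nat \<Rightarrow> complex \<Rightarrow> complex" where
  "C_gen k z = exp (of_real euler_mascheroni * z) * rGamma (of_nat k + 1 - z)"

lemma C_gen_holomorphic: "C_gen k holomorphic_on UNIV"
  unfolding C_gen_def by (intro holomorphic_intros)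

lemma Ccoef_eq_higher_deriv_C_gen: "Ccoef r k = Re ((deriv ^^ r) (C_gen k) 0) / fact r"
proof -
  have "C_gen k (of_real x) = of_real (exp (euler_mascheroni * x) * rGamma (real k + 1 - x))" for x
  proof -
    have "of_nat k + 1 - complex_of_real x = of_real (real k + 1 - x)" by simp
    then show ?thesis
      unfolding C_gen_def by (simp only: rGamma_complex_of_real of_real_mult flip: exp_of_real)
  qed
  then have "(deriv ^^ r) (\<lambda>z. exp (euler_mascheroni * z) * rGamma (real k + 1 - z)) 0
               = Re ((deriv ^^ r) (C_gen k) (of_real 0))"
    by (intro higher_deriv_Re_holomorphic[OF C_gen_holomorphic, of UNIV]) auto
  then show ?thesis unfolding Ccoef_def taylor_coeff_def by simp
qed

lemma C_gen_pred: "k \<ge> 1 \<Longrightarrow> C_gen (k - 1) = (\<lambda>z. (of_nat k - z) * C_gen k z)"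
proof
  fix z :: complex assume k: "k \<ge> 1"
  have "rGamma (of_nat (k - 1) + 1 - z) = rGamma (of_nat k - z)"
    using k by (simp add: of_nat_diff)
  also have "\<dots> = (of_nat k - z) * rGamma (of_nat k - z + 1)"
    by (simp add: rGamma_plus1)
  also have "of_nat k - z + 1 = of_nat k + 1 - z"
    by simp
  finally have "rGamma (of_nat (k - 1) + 1 - z) = (of_nat k - z) * rGamma (of_nat k + 1 - z)" .
  then show "C_gen (k - 1) z = (of_nat k - z) * C_gen k z"
    unfolding C_gen_def by (simp only: mult_ac)
qed

lemma higher_deriv_linear_mult:
  fixes G :: "complex \<Rightarrow> complex"
  assumes G: "G holomorphic_on UNIV"
  shows "(deriv ^^ r) (\<lambda>z. (a - z) * G z)
           = (\<lambda>z. (a - z) * (deriv ^^ r) G z - of_nat r * (deriv ^^ (r - 1)) G z)"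
proof (induction r)
  case 0
  then show ?case by simp
next
  case (Suc r)
  have G': "((deriv ^^ n) G has_field_derivative (deriv ^^ Suc n) G z) (at z)" for n z
    using holomorphic_higher_deriv[OF G open_UNIV] by (auto intro: holomorphic_derivI)
  have R: "((\<lambda>z. of_nat r * (deriv ^^ (r - 1)) G z) has_field_derivative
              of_nat r * (deriv ^^ r) G z) (at z)" for z
  proof (cases r)
    case (Suc n)
    then show ?thesis
      using DERIV_cmult[OF G'[of n z], of "of_nat r"] by simp
  qed simp
  have "((\<lambda>z. (a - z) * (deriv ^^ r) G z - of_nat r * (deriv ^^ (r - 1)) G z)
          has_field_derivative
          (a - z) * (deriv ^^ Suc r) G z - of_nat (Suc r) * (deriv ^^ r) G z) (at z)" for z
    using DERIV_diff[OF DERIV_mult'[OF DERIV_diff[OF DERIV_const[of a] DERIV_ident] G'[of r]] R]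
    by (simp add: algebra_simps)
  then have "deriv ((deriv ^^ r) (\<lambda>z. (a - z) * G z))
               = (\<lambda>z. (a - z) * (deriv ^^ Suc r) G z - of_nat (Suc r) * (deriv ^^ r) G z)"
    unfolding Suc.IH by (intro ext DERIV_imp_deriv)
  then show ?case
    by simp
qed

lemma Ccoef_pred:
  assumes k: "k \<ge> 1"
  shows "Ccoef r (k - 1) = real k * Ccoef r k - (if r = 0 then 0 else Ccoef (r - 1) k)"
proof -
  have "(deriv ^^ r) (C_gen (k - 1)) 0
          = of_nat k * (deriv ^^ r) (C_gen k) 0 - of_nat r * (deriv ^^ (r - 1)) (C_gen k) 0"
    unfolding C_gen_pred[OF k] higher_deriv_linear_mult[OF C_gen_holomorphic] by simp
  then have "Re ((deriv ^^ r) (C_gen (k - 1)) 0)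
          = real k * Re ((deriv ^^ r) (C_gen k) 0) - real r * Re ((deriv ^^ (r - 1)) (C_gen k) 0)"
    by simp
  moreover have "fact r = real r * fact (r - 1)" if "r \<ge> 1"
    using that by (simp add: fact_reduce)
  ultimately show ?thesis
    unfolding Ccoef_eq_higher_deriv_C_gen by (cases "r = 0") (auto simp: field_simps)
qed

section \<open>The coefficients \<open>E\<^sub>n\<^sub>,\<^sub>m\<close>\<close>

definition Ein_kernel :: "complex \<Rightarrow> complex" where
  "Ein_kernel z = (if z = 0 then 1 else (1 - exp (- z)) / z)"

lemma Ein_kernel_holomorphic: "Ein_kernel holomorphic_on UNIV"
proof (rule no_isolated_singularity'[where K = "{0}"])
  have "((\<lambda>z::complex. exp (- z)) has_field_derivative -1) (at 0)"
    by (auto intro!: derivative_eq_intros)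
  then have "((\<lambda>y. - ((exp (- y) - 1) / y)) \<longlongrightarrow> 1) (at (0::complex))"
    by (auto simp: has_field_derivative_iff dest: tendsto_minus)
  moreover have "eventually (\<lambda>y. - ((exp (- y) - 1) / y) = Ein_kernel y) (at (0::complex))"
    by (auto simp: eventually_at_filter Ein_kernel_def field_simps)
  ultimately have "(Ein_kernel \<longlongrightarrow> 1) (at 0)"
    by (rule Lim_transform_eventually)
  then show "\<And>z. z \<in> {0} \<Longrightarrow> (Ein_kernel \<longlongrightarrow> Ein_kernel z) (at z within UNIV)"
    by (simp add: Ein_kernel_def)
  have "(\<lambda>z. (1 - exp (- z)) / z) holomorphic_on (UNIV - {0})"
    by (intro holomorphic_intros) auto
  then show "Ein_kernel holomorphic_on UNIV - {0}"
    by (rule holomorphic_transform) (auto simp: Ein_kernel_def)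
qed auto

lemma Ein_kernel_primitive:
  obtains G where "\<And>z. (G has_field_derivative Ein_kernel z) (at z)" and "G 0 = 0"
proof -
  obtain g where g: "\<And>z. (g has_field_derivative Ein_kernel z) (at z)"
    using holomorphic_convex_primitive'[OF convex_UNIV open_UNIV Ein_kernel_holomorphic] by auto
  show thesis
    by (rule that[of "\<lambda>z. g z - g 0"]) (auto intro!: derivative_eq_intros g)
qed

lemma Ein_kernel_of_real:
  "Ein_kernel (of_real y) = of_real (if y = 0 then 1 else (1 - exp (- y)) / y)"
  by (simp add: Ein_kernel_def exp_of_real flip: of_real_minus)

lemma Ein_eq_primitive:
  assumes G: "\<And>z. (G has_field_derivative Ein_kernel z) (at z)" and G0: "G 0 = 0"
  shows "complex_of_real (Ein x) = G (of_real x)"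
proof -
  have "((\<lambda>y. G (of_real y)) has_vector_derivative Ein_kernel (of_real y)) (at y within A)"
    for y A by (rule has_vector_derivative_real_field[OF G])
  from bounded_linear.has_vector_derivative[OF bounded_linear_Re this]
       bounded_linear.has_vector_derivative[OF bounded_linear_Im this]
  have Re': "((\<lambda>y. Re (G (of_real y))) has_real_derivative Re (Ein_kernel (of_real y))) (at y within A)"
   and Im': "((\<lambda>y. Im (G (of_real y))) has_real_derivative 0) (at y within A)" for y A
    by (simp_all add: Ein_kernel_of_real has_real_derivative_iff_has_vector_derivative)
  have "Im (G (of_real x)) = Im (G (of_real 0))"
    by (rule DERIV_isconst_all) (intro allI Im')
  then have Im: "Im (G (of_real x)) = 0"
    using G0 by simp
  let ?e = "\<lambda>y. Re (G (of_real y))"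
  let ?h = "\<lambda>t::real. (1 - exp (- t)) / t"
  have ftc: "(?h has_integral ?e b - ?e a) {a..b}" if "a \<le> b" for a b
  proof -
    have "((\<lambda>t. Re (Ein_kernel (of_real t))) has_integral ?e b - ?e a) {a..b}"
      by (rule fundamental_theorem_of_calculus[OF that])
         (auto simp: has_real_derivative_iff_has_vector_derivative[symmetric] intro: Re')
    then show ?thesis
      by (rule has_integral_spike_finite[where S = "{0}", rotated 2]) (auto simp: Ein_kernel_of_real)
  qed
  have e0: "?e 0 = 0"
    using G0 by simp
  have "Ein x = ?e x"
  proof (cases "0 \<le> x")
    case True
    then have "(?h has_integral ?e x) {0..x}"
      using ftc[OF True] e0 by simp
    then show ?thesis
      using True by (simp add: Ein_def integral_unique)
  next
    case False
    then have "(?h has_integral - ?e x) {x..0}"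
      using ftc[of x 0] e0 by simp
    then show ?thesis
      using False by (simp add: Ein_def integral_unique)
  qed
  then show ?thesis
    using Im by (simp add: complex_eq_iff)
qed

lemma higher_deriv_power_eq_0:
  fixes G :: "complex \<Rightarrow> complex"
  assumes G: "G holomorphic_on S" and S: "open S" and z: "z \<in> S" and Gz: "G z = 0"
  shows "n < m \<Longrightarrow> (deriv ^^ n) (\<lambda>w. G w ^ m) z = 0"
proof (induction m arbitrary: n)
  case 0
  then show ?case by simp
next
  case (Suc m)
  have "(deriv ^^ n) (\<lambda>w. G w ^ Suc m) z = (deriv ^^ n) (\<lambda>w. G w * G w ^ m) z"
    by simp
  also have "\<dots> = (\<Sum>i = 0..n. of_nat (n choose i) * (deriv ^^ i) G z
                                    * (deriv ^^ (n - i)) (\<lambda>w. G w ^ m) z)"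
    using G S z by (intro higher_deriv_mult) (auto intro: holomorphic_intros)
  also have "\<dots> = 0"
  proof (intro sum.neutral ballI)
    fix i assume "i \<in> {0..n}"
    then show "of_nat (n choose i) * (deriv ^^ i) G z * (deriv ^^ (n - i)) (\<lambda>w. G w ^ m) z = 0"
      using Suc.IH[of "n - i"] Suc.prems Gz by (cases "i = 0") auto
  qed
  finally show ?case .
qed

lemma Ecoef_eq_0:
  assumes "n < m"
  shows "Ecoef n m = 0"
proof -
  obtain G where G: "\<And>z. (G has_field_derivative Ein_kernel z) (at z)" and G0: "G 0 = 0"
    using Ein_kernel_primitive by blast
  have "G holomorphic_on UNIV"
    using G by (auto simp: holomorphic_on_def field_differentiable_def
                     intro: has_field_derivative_at_within)
  then have "(deriv ^^ n) (\<lambda>z. Ein z ^ m) 0 = Re ((deriv ^^ n) (\<lambda>z. G z ^ m) (of_real 0))"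
    by (intro higher_deriv_Re_holomorphic[of _ UNIV UNIV])
       (auto intro: holomorphic_intros simp flip: Ein_eq_primitive[OF G G0])
  also have "\<dots> = 0"
    using higher_deriv_power_eq_0[OF \<open>G holomorphic_on UNIV\<close> open_UNIV _ G0 assms] by simp
  finally show ?thesis
    unfolding Ecoef_def taylor_coeff_def by simp
qed

section \<open>Differentiating \<open>Ktilde\<close>\<close>

lemma sum_shift_index:
  fixes f g :: "nat \<Rightarrow> 'a::comm_monoid_add"
  assumes "f N = 0" "g 0 = 0" "\<And>r. r < N \<Longrightarrow> f r = g (Suc r)"
  shows "(\<Sum>r=0..N. f r) = (\<Sum>r=0..N. g r)"
proof (cases N)
  case 0
  then show ?thesis using assms by simp
next
  case (Suc M)
  have "(\<Sum>r=0..N. f r) = (\<Sum>r=0..M. g (Suc r))"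
    using assms by (simp add: Suc sum.atLeast0_atMost_Suc)
  also have "\<dots> = (\<Sum>r=0..N. g r)"
    unfolding Suc sum.atLeast0_atMost_Suc_shift using assms by simp
  finally show ?thesis .
qed

definition Kblock :: "nat \<Rightarrow> nat \<Rightarrow> nat \<Rightarrow> real \<Rightarrow> real" where
  "Kblock l m k v = (\<Sum>r=0..l-m. (-1)^r / (fact m * fact (l - m - r)) * Ccoef r k
                                 * (v ^ k * ln v ^ (l - m - r)))"

lemma Gamma_of_nat_plus_1: "Gamma (real n + 1) = fact n"
  using Gamma_fact[of n] by (simp add: add.commute)

lemma Ktilde_eq_Kblock:
  "Ktilde l v \<kappa> = fact \<kappa> * (\<Sum>m=0..l. \<Sum>n=m..\<kappa>. Ecoef n m * Kblock l m (\<kappa> - n) v)"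
  unfolding Ktilde_def Kblock_def Gamma_of_nat_plus_1
  by (simp add: sum_distrib_left divide_inverse mult_ac)

lemma power_mult_ln_power_has_real_derivative:
  assumes "k \<ge> 1" "v > 0"
  shows "((\<lambda>w. w ^ k * ln w ^ p) has_real_derivative
            v ^ (k - 1) * (real k * ln v ^ p + real p * ln v ^ (p - 1))) (at v)"
proof -
  have "((\<lambda>w. w ^ k * ln w ^ p) has_real_derivative
          real k * v ^ (k - 1) * ln v ^ p + v ^ k * (real p * ln v ^ (p - 1) * (1 / v))) (at v)"
    using assms by (auto intro!: derivative_eq_intros)
  also have "real k * v ^ (k - 1) * ln v ^ p + v ^ k * (real p * ln v ^ (p - 1) * (1 / v))
               = v ^ (k - 1) * (real k * ln v ^ p + real p * ln v ^ (p - 1))"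
    using assms by (cases k) (auto simp: field_simps)
  finally show ?thesis .
qed

lemma Kblock_has_real_derivative:
  assumes k: "k \<ge> 1" and v: "v > 0"
  shows "(Kblock l m k has_real_derivative Kblock l m (k - 1) v) (at v)"
proof -
  define N where "N = l - m"
  define c where "c r = (-1)^r / (fact m * fact (N - r) :: real)" for r
  have Kblock_N: "Kblock l m k' = (\<lambda>w. \<Sum>r=0..N. c r * Ccoef r k' * (w ^ k' * ln w ^ (N - r)))"
    for k' unfolding Kblock_def N_def c_def by simp
  have c_Suc: "c (Suc r) = (real r - real N) * c r" if "r < N" for r
  proof -
    have "N - r = Suc (N - Suc r)"
      using that by simp
    then show ?thesis
      unfolding c_def using that by (simp add: field_simps of_nat_diff)
  qed
  have shift: "(\<Sum>r=0..N. real (N - r) * c r * Ccoef r k * ln v ^ (N - r - 1))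
          = (\<Sum>r=0..N. - c r * (if r = 0 then 0 else Ccoef (r - 1) k) * ln v ^ (N - r))"
    by (rule sum_shift_index) (auto simp: c_Suc algebra_simps)
  have "(Kblock l m k has_real_derivative (\<Sum>r=0..N. c r * Ccoef r k
          * (v ^ (k - 1) * (real k * ln v ^ (N - r) + real (N - r) * ln v ^ (N - r - 1))))) (at v)"
    unfolding Kblock_N
    by (intro DERIV_sum DERIV_cmult power_mult_ln_power_has_real_derivative k v)
  also have "(\<Sum>r=0..N. c r * Ccoef r k
          * (v ^ (k - 1) * (real k * ln v ^ (N - r) + real (N - r) * ln v ^ (N - r - 1))))
      = v ^ (k - 1) * ((\<Sum>r=0..N. c r * (real k * Ccoef r k) * ln v ^ (N - r))
          + (\<Sum>r=0..N. real (N - r) * c r * Ccoef r k * ln v ^ (N - r - 1)))"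
    unfolding distrib_left sum_distrib_left sum.distrib[symmetric]
    by (intro sum.cong refl) (simp add: algebra_simps)
  also have "\<dots> = Kblock l m (k - 1) v"
    unfolding shift Kblock_N Ccoef_pred[OF k] distrib_left sum_distrib_left sum.distrib[symmetric]
    by (intro sum.cong refl) (simp add: algebra_simps)
  finally show ?thesis .
qed

lemma ln_power_has_real_derivative:
  "v > 0 \<Longrightarrow> ((\<lambda>v. ln v ^ p) has_real_derivative deriv (\<lambda>v. ln v ^ p) v) (at v)"
  using smooth_on_imp_has_real_derivative[OF smooth_on_ln_power] by simp

lemma Kblock_0_has_real_derivative:
  assumes "v > 0"
  shows "(Kblock l m 0 has_real_derivative
            (\<Sum>r=0..l-m. (-1)^r / (fact m * fact (l - m - r)) * Ccoef r 0
                          * deriv (\<lambda>v. ln v ^ (l - m - r)) v)) (at v)"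
  unfolding Kblock_def power_0 mult_1_left
  by (intro DERIV_sum DERIV_cmult ln_power_has_real_derivative assms)

text \<open>\<open>Klog l \<kappa> (\<kappa> - j) (\<nu> - j) u\<close> is the \<open>j\<close>-th summand of the correction term in the formula.\<close>

definition Klog :: "nat \<Rightarrow> nat \<Rightarrow> nat \<Rightarrow> nat \<Rightarrow> real \<Rightarrow> real" where
  "Klog l \<kappa> n i u = (\<Sum>m=0..l. \<Sum>r=0..l-m.
     (-1)^r * Gamma (real \<kappa> + 1) / (fact m * fact (l - m - r)) * Ecoef n m * Ccoef r 0
     * (deriv ^^ i) (\<lambda>v. ln v ^ (l - m - r)) u)"

lemma Klog_Suc: "Klog l (Suc \<kappa>) n i u = real (Suc \<kappa>) * Klog l \<kappa> n i u"
proof -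
  have "Gamma (real (Suc \<kappa>) + 1) = real (Suc \<kappa>) * Gamma (real \<kappa> + 1)"
    by (simp only: Gamma_of_nat_plus_1 fact_Suc)
  then show ?thesis
    unfolding Klog_def sum_distrib_left by (simp add: mult_ac del: of_nat_Suc)
qed

lemma smooth_on_Klog: "smooth_on {0<..} (Klog l \<kappa> n i)"
  unfolding Klog_def[abs_def]
  by (intro smooth_on_sum smooth_on_lincomb smooth_on_higher_deriv smooth_on_ln_power) simp_all

lemma higher_deriv_Klog:
  assumes "u > 0"
  shows "(deriv ^^ \<nu>) (Klog l \<kappa> n i) u = Klog l \<kappa> n (\<nu> + i) u"
proof -
  let ?c = "\<lambda>m r. (-1)^r * Gamma (real \<kappa> + 1) / (fact m * fact (l - m - r)) * Ecoef n m * Ccoef r 0"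
  let ?L = "\<lambda>p. (deriv ^^ i) (\<lambda>v. ln v ^ p)"
  have u: "u \<in> {0<..}"
    using assms by simp
  have L: "smooth_on {0<..} (?L p)" for p
    by (rule smooth_on_higher_deriv[OF smooth_on_ln_power])
  have "(deriv ^^ \<nu>) (Klog l \<kappa> n i) u
          = (\<Sum>m=0..l. (deriv ^^ \<nu>) (\<lambda>v. \<Sum>r=0..l-m. ?c m r * ?L (l - m - r) v) u)"
    unfolding Klog_def[abs_def]
    by (intro higher_deriv_sum[OF open_greaterThan _ u] smooth_on_lincomb L)
       simp_all
  also have "\<dots> = (\<Sum>m=0..l. \<Sum>r=0..l-m. ?c m r * (deriv ^^ \<nu>) (?L (l - m - r)) u)"
    by (intro sum.cong refl higher_deriv_lincomb[OF open_greaterThan L u])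
  finally show ?thesis
    unfolding Klog_def by (simp only: funpow_add o_apply)
qed

lemma Ktilde_inner_has_real_derivative:
  assumes v: "v > 0"
  shows "((\<lambda>w. \<Sum>n=m..\<kappa>. Ecoef n m * Kblock l m (\<kappa> - n) w) has_real_derivative
            (\<Sum>n\<in>{m..<\<kappa>}. Ecoef n m * Kblock l m (\<kappa> - n - 1) v)
            + Ecoef \<kappa> m * (\<Sum>r=0..l-m. (-1)^r / (fact m * fact (l - m - r)) * Ccoef r 0
                                         * deriv (\<lambda>v. ln v ^ (l - m - r)) v)) (at v)"
proof (cases "m \<le> \<kappa>")
  case True
  then have "{m..\<kappa>} = insert \<kappa> {m..<\<kappa>}"
    by auto
  then have "(\<lambda>w. \<Sum>n=m..\<kappa>. Ecoef n m * Kblock l m (\<kappa> - n) w)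
               = (\<lambda>w. (\<Sum>n\<in>{m..<\<kappa>}. Ecoef n m * Kblock l m (\<kappa> - n) w) + Ecoef \<kappa> m * Kblock l m 0 w)"
    by (simp add: fun_eq_iff)
  then show ?thesis
    by (simp only:)
       (intro DERIV_add DERIV_sum DERIV_cmult Kblock_has_real_derivative
              Kblock_0_has_real_derivative v, auto)
next
  case False
  \<comment> \<open>the sum is empty, and the boundary term vanishes because \<open>E(\<kappa>,m) = 0\<close>\<close>
  then show ?thesis
    by (simp add: Ecoef_eq_0)
qed

lemma Ktilde_has_real_derivative:
  assumes v: "v > 0"
  shows "((\<lambda>v. Ktilde l v (Suc \<kappa>)) has_real_derivative
            real (Suc \<kappa>) * Ktilde l v \<kappa> + Klog l (Suc \<kappa>) (Suc \<kappa>) 1 v) (at v)"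
proof -
  let ?A = "\<lambda>m. \<Sum>n\<in>{m..<Suc \<kappa>}. Ecoef n m * Kblock l m (Suc \<kappa> - n - 1) v"
  let ?B = "\<lambda>m. Ecoef (Suc \<kappa>) m * (\<Sum>r=0..l-m. (-1)^r / (fact m * fact (l - m - r)) * Ccoef r 0
                                                * deriv (\<lambda>v. ln v ^ (l - m - r)) v)"
  have "((\<lambda>v. Ktilde l v (Suc \<kappa>)) has_real_derivative fact (Suc \<kappa>) * (\<Sum>m=0..l. ?A m + ?B m)) (at v)"
    unfolding Ktilde_eq_Kblock
    by (intro DERIV_cmult DERIV_sum Ktilde_inner_has_real_derivative v)
  also have "fact (Suc \<kappa>) * (\<Sum>m=0..l. ?A m + ?B m)
               = fact (Suc \<kappa>) * (\<Sum>m=0..l. ?A m) + fact (Suc \<kappa>) * (\<Sum>m=0..l. ?B m)"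
    by (simp only: sum.distrib distrib_left)
  also have "fact (Suc \<kappa>) * (\<Sum>m=0..l. ?A m) = real (Suc \<kappa>) * Ktilde l v \<kappa>"
    unfolding atLeastLessThanSuc_atLeastAtMost Ktilde_eq_Kblock by (simp add: mult.assoc)
  also have "fact (Suc \<kappa>) * (\<Sum>m=0..l. ?B m) = Klog l (Suc \<kappa>) (Suc \<kappa>) 1 v"
    unfolding Klog_def Gamma_of_nat_plus_1
    by (simp add: sum_distrib_left divide_inverse mult_ac)
  finally show ?thesis .
qed

lemma smooth_on_Ktilde: "smooth_on {0<..} (\<lambda>v. Ktilde l v \<kappa>)"
proof -
  have "(\<lambda>v. Ktilde l v \<kappa>) = (\<lambda>v. \<Sum>m=0..l. \<Sum>n=m..\<kappa>. \<Sum>r=0..l-m.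
          ((-1)^r * Gamma (real \<kappa> + 1) / (fact m * fact (l - m - r)) * Ecoef n m * Ccoef r (\<kappa> - n))
          * (v ^ (\<kappa> - n) * ln v ^ (l - m - r)))"
    by (simp add: Ktilde_def mult.assoc fun_eq_iff)
  then show ?thesis
    by (simp only:) (intro smooth_on_sum smooth_on_lincomb smooth_on_power_mult_ln_power; simp)
qed

lemma falling_Suc: "falling x (Suc n) = x * falling (x - 1) n"
  unfolding falling_def prod.lessThan_Suc_shift by (simp add: algebra_simps)

lemma higher_deriv_Ktilde:
  "\<nu> \<le> \<kappa> \<Longrightarrow> u > 0 \<Longrightarrow> (deriv ^^ \<nu>) (\<lambda>v. Ktilde l v \<kappa>) u
     = falling (real \<kappa>) \<nu> * Ktilde l u (\<kappa> - \<nu>) + (\<Sum>j<\<nu>. Klog l \<kappa> (\<kappa> - j) (\<nu> - j) u)"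
proof (induction \<nu> arbitrary: \<kappa>)
  case 0
  then show ?case by (simp add: falling_def)
next
  case (Suc \<nu>)
  then obtain k where \<kappa>: "\<kappa> = Suc k" and "\<nu> \<le> k" and u: "u > 0"
    by (metis Suc_le_D Suc_le_mono)
  have D: "deriv (\<lambda>v. Ktilde l v (Suc k)) v = real (Suc k) * Ktilde l v k + Klog l (Suc k) (Suc k) 1 v"
    if "v \<in> {0<..}" for v
    using that by (intro DERIV_imp_deriv Ktilde_has_real_derivative) simp
  have "eventually (\<lambda>v. v \<in> {0<..}) (nhds u)"
    using u by (intro eventually_nhds_in_open) auto
  then have "eventually (\<lambda>v. deriv (\<lambda>v. Ktilde l v (Suc k)) v
               = real (Suc k) * Ktilde l v k + Klog l (Suc k) (Suc k) 1 v) (nhds u)"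
    by (rule eventually_mono) (rule D)
  then have "(deriv ^^ Suc \<nu>) (\<lambda>v. Ktilde l v (Suc k)) u
               = (deriv ^^ \<nu>) (\<lambda>v. real (Suc k) * Ktilde l v k + Klog l (Suc k) (Suc k) 1 v) u"
    unfolding funpow_Suc_right o_apply by (rule higher_deriv_cong_ev) simp
  also have "\<dots> = real (Suc k) * (deriv ^^ \<nu>) (\<lambda>v. Ktilde l v k) u + Klog l (Suc k) (Suc k) (Suc \<nu>) u"
    using u higher_deriv_add_cmult[OF open_greaterThan smooth_on_Ktilde smooth_on_Klog, of u]
    by (simp add: higher_deriv_Klog)
  also have "(deriv ^^ \<nu>) (\<lambda>v. Ktilde l v k) u
               = falling (real k) \<nu> * Ktilde l u (k - \<nu>) + (\<Sum>j<\<nu>. Klog l k (k - j) (\<nu> - j) u)"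
    using Suc.IH \<open>\<nu> \<le> k\<close> u by blast
  finally show ?case
    unfolding \<kappa> sum.lessThan_Suc_shift
    by (simp add: falling_Suc Klog_Suc sum_distrib_left algebra_simps)
qed

theorem lemma4:
  fixes l \<kappa> \<nu> :: nat and u :: real
  assumes "l \<ge> 1" and "\<kappa> \<ge> 1" and "1 \<le> \<nu>" and "\<nu> \<le> \<kappa>" and "u > 1"
  shows "(deriv ^^ \<nu>) (\<lambda>v. Ktilde l v \<kappa>) u =
     falling (real \<kappa>) \<nu> * Ktilde l u (\<kappa> - \<nu>)
     + (\<Sum>j=0..\<nu>-1. \<Sum>m=0..l. \<Sum>r=0..l-m.
          (-1)^r * Gamma (real \<kappa> + 1) / (fact m * fact (l - m - r))
          * Ecoef (\<kappa> - j) m * Ccoef r 0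
          * (deriv ^^ (\<nu> - j)) (\<lambda>v. ln v ^ (l - m - r)) u)"
proof -
  have "{0..\<nu>-1} = {..<\<nu>}"
    using \<open>1 \<le> \<nu>\<close> by auto
  then show ?thesis
    using higher_deriv_Ktilde[OF \<open>\<nu> \<le> \<kappa>\<close>, of u l] \<open>u > 1\<close> by (simp add: Klog_def)
qed

end
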